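(* Let $I$ be a homogeneous tropical ideal in $\overline{\mathbb R}[x_0,\dots,x_n]$ and let $\prec$ be a monomial term order. There is a nonempty polyhedron $C_\prec\subseteq\mathbb R^{n+1}$ with $(n+1)$-dimensional recession cone such that $\operatorname{in}_{\mathbf w}(I)=\operatorname{in}_\prec(I)$ for all $\mathbf w$ in the interior of $C_\prec$.
   Context: $\overline{\mathbb R}=(\mathbb R\cup\{\infty\},\min,+)$, $\mathbb B=\{0,\infty\}$. A homogeneous tropical ideal is a homogeneous ideal $I$ such that for homogeneous $f,g\in I$ of equal degree and a monomial $\mathbf x^{\mathbf u}$ with equal coefficients $[f]_{\mathbf x^{\mathbf u}}=[g]_{\mathbf x^{\mathbf u}}\ne\infty$ there is $h\in I$ with $[h]_{\mathbf x^{\mathbf u}}=\infty$ and $[h]_{\mathbf x^{\mathbf v}}\ge\min([f]_{\mathbf x^{\mathbf v}},[g]_{\mathbf x^{\mathbf v}})$ for all $\mathbf v$, with equality when $[f]_{\mathbf x^{\mathbf v}}\ne[g]_{\mathbf x^{\mathbf v}}$. A monomial term order is a total order $\prec$ on monomials such that $\mathbf x^{\mathbf u}\prec\mathbf x^{\mathbf u'}$ implies $\mathbf x^{\mathbf u+\mathbf v}\prec\mathbf x^{\mathbf u'+\mathbf v}$ for all $\mathbf v$, and $\mathbf x^{\mathbf u}\prec\mathbf x^{\mathbf 0}$ for all $\mathbf u\ne\mathbf 0$. $\operatorname{in}_\prec(f)$ is the $\prec$-smallest monomial with non-$\infty$ coefficient in $f$, and $\operatorname{in}_\prec(I)$ is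 the monomial ideal of $\mathbb B[x_0,\dots,x_n]$ generated by $\{\operatorname{in}_\prec(f):f\in I\}$. For $\mathbf w\in\mathbb R^{n+1}$, $\operatorname{in}_{\mathbf w}(f)=\bigoplus_{\mathbf u:[f]_{\mathbf x^{\mathbf u}}+\mathbf u\cdot\mathbf w=\min_{\mathbf u'}([f]_{\mathbf x^{\mathbf u'}}+\mathbf u'\cdot\mathbf w)}\mathbf x^{\mathbf u}$ and $\operatorname{in}_{\mathbf w}(I)=\{\operatorname{in}_{\mathbf w}(f):f\in I\}$. The recession cone of a polyhedron $P$ is the largest cone $C$ with $P+C\subseteq P$. *)

theory Defs
  imports "HOL-Analysis.Analysis"
begin

(* Exponent vectors of monomials in the variables indexed by the finite type 'n
   (|'n| = n+1 variables x_0..x_n). *)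
type_synonym 'n expo = "'n \<Rightarrow> nat"

(* Tropical polynomials over (R \<union> {\<infinity>}, min, +): coefficient functions into ereal,
   never -\<infinity>, finitely many non-\<infinity> coefficients.  \<infinity> plays the role of tropical zero. *)
type_synonym 'n tpoly = "'n expo \<Rightarrow> ereal"

definition is_tpoly :: "'n tpoly \<Rightarrow> bool" where
  "is_tpoly f \<longleftrightarrow> (\<forall>u. f u \<noteq> -\<infinity>) \<and> finite {u. f u \<noteq> \<infinity>}"

definition tdeg :: "'n::finite expo \<Rightarrow> nat" where
  "tdeg u = (\<Sum>i\<in>UNIV. u i)"

definition homog_of_deg :: "nat \<Rightarrow> 'n::finite tpoly \<Rightarrow> bool" where
  "homog_of_deg d f \<longleftrightarrow> (\<forall>u. f u \<noteq> \<infinity> \<longrightarrow> tdeg u = d)"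

definition homog :: "'n::finite tpoly \<Rightarrow> bool" where
  "homog f \<longleftrightarrow> (\<exists>d. homog_of_deg d f)"

definition tadd :: "'n tpoly \<Rightarrow> 'n tpoly \<Rightarrow> 'n tpoly" where
  "tadd f g = (\<lambda>u. min (f u) (g u))"

definition tmult :: "'n tpoly \<Rightarrow> 'n tpoly \<Rightarrow> 'n tpoly" where
  "tmult f g = (\<lambda>u. INF p\<in>{(v, w). (\<lambda>i. v i + w i) = u}. f (fst p) + g (snd p))"

definition hcomp :: "nat \<Rightarrow> 'n::finite tpoly \<Rightarrow> 'n tpoly" where
  "hcomp d f = (\<lambda>u. if tdeg u = d then f u else \<infinity>)"

definition tideal :: "'n tpoly set \<Rightarrow> bool" where
  "tideal I \<longleftrightarrow> I \<noteq> {} \<and> (\<forall>f\<in>I. is_tpoly f)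
     \<and> (\<forall>f\<in>I. \<forall>g\<in>I. tadd f g \<in> I)
     \<and> (\<forall>f\<in>I. \<forall>g. is_tpoly g \<longrightarrow> tmult g f \<in> I)"

(* homogeneous ideal: contains all homogeneous components of its elements
   (equivalently: generated by homogeneous polynomials) *)
definition homog_ideal :: "'n::finite tpoly set \<Rightarrow> bool" where
  "homog_ideal I \<longleftrightarrow> tideal I \<and> (\<forall>f\<in>I. \<forall>d. hcomp d f \<in> I)"

definition homog_tropical_ideal :: "'n::finite tpoly set \<Rightarrow> bool" where
  "homog_tropical_ideal I \<longleftrightarrow> homog_ideal I \<and>
    (\<forall>f\<in>I. \<forall>g\<in>I. \<forall>d u. homog_of_deg d f \<and> homog_of_deg d g \<and> f u = g u \<and> f u \<noteq> \<infinity> \<longrightarrow>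
       (\<exists>h\<in>I. h u = \<infinity> \<and> (\<forall>v. h v \<ge> min (f v) (g v) \<and> (f v \<noteq> g v \<longrightarrow> h v = min (f v) (g v)))))"

(* monomial term order, given as strict relation prec u v  meaning  x^u \<prec> x^v *)
definition monomial_term_order :: "('n expo \<Rightarrow> 'n expo \<Rightarrow> bool) \<Rightarrow> bool" where
  "monomial_term_order prec \<longleftrightarrow>
     (\<forall>u. \<not> prec u u) \<and> (\<forall>u v w. prec u v \<longrightarrow> prec v w \<longrightarrow> prec u w)
     \<and> (\<forall>u v. u \<noteq> v \<longrightarrow> prec u v \<or> prec v u)
     \<and> (\<forall>u u' v. prec u u' \<longrightarrow> prec (\<lambda>i. u i + v i) (\<lambda>i. u' i + v i))
     \<and> (\<forall>u. u \<noteq> (\<lambda>i. 0) \<longrightarrow> prec u (\<lambda>i. 0))"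

(* polynomials over B = {0,\<infinity>} represented by their (finite) set of monomials with coefficient 0 *)
type_synonym 'n bpoly = "'n expo set"

definition init_prec :: "('n expo \<Rightarrow> 'n expo \<Rightarrow> bool) \<Rightarrow> 'n tpoly \<Rightarrow> 'n expo" where
  "init_prec prec f = (THE u. f u \<noteq> \<infinity> \<and> (\<forall>v. f v \<noteq> \<infinity> \<longrightarrow> v \<noteq> u \<longrightarrow> prec u v))"

(* monomial ideal of B[x] generated by {in_prec f : f \<in> I} (f with some non-\<infinity> coefficient):
   a B-polynomial lies in it iff each of its monomials is divisible by a generator *)
definition init_prec_ideal :: "('n expo \<Rightarrow> 'n expo \<Rightarrow> bool) \<Rightarrow> 'n tpoly set \<Rightarrow> 'n bpoly set" where
  "init_prec_ideal prec I = {S. finite S \<and>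
      (\<forall>v\<in>S. \<exists>f\<in>I. (\<exists>u. f u \<noteq> \<infinity>) \<and> (\<forall>i. init_prec prec f i \<le> v i))}"

definition wdot :: "'n::finite expo \<Rightarrow> real^'n \<Rightarrow> real" where
  "wdot u w = (\<Sum>i\<in>UNIV. real (u i) * w $ i)"

definition init_w :: "real^'n::finite \<Rightarrow> 'n tpoly \<Rightarrow> 'n bpoly" where
  "init_w w f = {u. f u \<noteq> \<infinity> \<and> (\<forall>u'. f u + ereal (wdot u w) \<le> f u' + ereal (wdot u' w))}"

definition init_w_ideal :: "real^'n::finite \<Rightarrow> 'n tpoly set \<Rightarrow> 'n bpoly set" where
  "init_w_ideal w I = init_w w ` I"

definition recession_cone :: "'a::real_vector set \<Rightarrow> 'a set" where
  "recession_cone P = \<Union>{C. cone C \<and> (\<forall>x\<in>P. \<forall>c\<in>C. x + c \<in> P)}"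

end

(*
  The \<prec>-initial exponents of I form a monomial ideal M with finitely many minimal
  generators u (Dickson's lemma); for each u pick a homogeneous g_u in I with \<prec>-leading
  exponent u. C is the polyhedron of weights w for which u is the w-initial exponent of g_u
  with margin 1 over every other exponent of g_u. For w in C every v in M is the unique
  w-initial exponent of a monomial multiple of some g_u; tropical sums of these multiples
  realise every finite subset of M as some in_w(f), and the elimination axiom removes the
  exponents of M from f in \<prec>-increasing order while keeping a w-initial exponent v, so v
  can never lie outside M. C is nonempty with full-dimensional recession cone because the
  finitely many differences s - u with u \<prec> s admit a common strictly positive weight
  (Fourier-Motzkin elimination, using that \<prec> is compatible with addition).
*)

theory Submission
  imports Defs "HOL-Library.Function_Algebras"
begin

section \<open>Exponents and Dickson's lemma\<close>

lemma tdeg_add: "tdeg (u + v) = tdeg u + tdeg v"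
  unfolding tdeg_def by (simp add: sum.distrib)

lemma tdeg_less:
  assumes "v \<le> u" "v \<noteq> u"
  shows "tdeg v < tdeg u"
proof -
  obtain i where "v i < u i" using assms by (auto simp: le_fun_def fun_eq_iff order.strict_iff_order)
  then show ?thesis
    unfolding tdeg_def by (intro sum_strict_mono_ex1) (use assms(1) in \<open>auto simp: le_fun_def\<close>)
qed

lemma finite_tdeg_eq: "finite {u :: 'n::finite expo. tdeg u = d}"
proof (rule finite_subset)
  show "{u :: 'n expo. tdeg u = d} \<subseteq> PiE UNIV (\<lambda>_. {..d})"
  proof
    fix u :: "'n expo" assume "u \<in> {u. tdeg u = d}"
    then have "u i \<le> d" for i unfolding tdeg_def using member_le_sum[of i UNIV u] by auto
    then show "u \<in> PiE UNIV (\<lambda>_. {..d})" by (auto simp: PiE_def extensional_def)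
  qed
qed (simp add: finite_PiE)

lemma wdot_add: "wdot (u + v) w = wdot u w + wdot v w"
  unfolding wdot_def by (simp add: sum.distrib algebra_simps)

lemma wdot_eq_inner: "wdot u w = (\<chi> i. real (u i)) \<bullet> w"
  unfolding wdot_def inner_vec_def by simp

lemma nat_seq_incseq_subseq:
  fixes t :: "nat \<Rightarrow> nat"
  obtains r where "strict_mono r" "incseq (\<lambda>n. t (r n))"
proof -
  obtain r where r: "strict_mono r" "monoseq (\<lambda>n. t (r n))" using seq_monosub by blast
  show thesis
  proof (cases "incseq (\<lambda>n. t (r n))")
    case True
    with r(1) show thesis by (rule that)
  next
    case False
    then have dec: "decseq (\<lambda>n. t (r n))" using r(2) by (simp add: monoseq_iff)
    obtain N where N: "\<And>n. t (r N) \<le> t (r n)"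
      using ex_has_least_nat[of "\<lambda>_. True" 0 "\<lambda>n. t (r n)"] by blast
    have "t (r (n + N)) = t (r N)" for n
      using N[of "n + N"] decseqD[OF dec, of N "n + N"] by simp
    then have "incseq (\<lambda>n. t (r (n + N)))" by (simp add: incseq_def)
    moreover have "strict_mono (\<lambda>n. r (n + N))" using r(1) by (simp add: strict_mono_def)
    ultimately show thesis by (rule that[rotated])
  qed
qed

lemma dickson_subseq:
  fixes s :: "nat \<Rightarrow> 'k \<Rightarrow> nat"
  assumes "finite K"
  obtains r where "strict_mono r" "\<And>k. k \<in> K \<Longrightarrow> incseq (\<lambda>n. s (r n) k)"
  using assms
proof (induction K arbitrary: thesis rule: finite_induct)
  case empty
  show ?case using strict_mono_id by (rule empty) simp
next
  case (insert k K)
  obtain r where r: "strict_mono r" "\<And>k. k \<in> K \<Longrightarrow> incseq (\<lambda>n. s (r n) k)"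
    using insert.IH by auto
  obtain r' where r': "strict_mono r'" "incseq (\<lambda>n. s (r (r' n)) k)"
    by (rule nat_seq_incseq_subseq[of "\<lambda>n. s (r n) k"])
  show ?case
  proof (rule insert.prems)
    show "strict_mono (\<lambda>n. r (r' n))" using r(1) r'(1) by (simp add: strict_mono_def)
    show "incseq (\<lambda>n. s (r (r' n)) k')" if "k' \<in> insert k K" for k'
    proof (cases "k' = k")
      case False
      then have "incseq (\<lambda>n. s (r n) k')" using that r(2) by simp
      with r'(1) show ?thesis by (simp add: incseq_def strict_mono_less_eq)
    qed (use r'(2) in simp)
  qed
qed

lemma dickson:
  fixes s :: "nat \<Rightarrow> 'n::finite \<Rightarrow> nat"
  obtains i j where "i < j" "s i \<le> s j"
proof -
  obtain r where r: "strict_mono r" "\<And>k. incseq (\<lambda>n. s (r n) k)"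
    using dickson_subseq[of UNIV s] by auto
  have "r 0 < r 1" using r(1) by (simp add: strict_mono_def)
  moreover have "s (r 0) \<le> s (r 1)" using r(2) by (simp add: le_fun_def incseq_def)
  ultimately show thesis by (rule that)
qed

lemma finite_minimal_elements:
  fixes S :: "('n::finite \<Rightarrow> nat) set"
  shows "finite {u \<in> S. \<forall>v\<in>S. v \<le> u \<longrightarrow> v = u}" (is "finite ?M")
proof (rule ccontr)
  assume "infinite ?M"
  then obtain s :: "nat \<Rightarrow> _" where s: "inj s" "range s \<subseteq> ?M"
    using infinite_countable_subset by blast
  obtain i j where ij: "i < j" "s i \<le> s j" using dickson by blast
  have "s i \<in> S" "s j \<in> ?M" using s(2) by auto
  with ij(2) have "s i = s j" by blast
  with s(1) ij(1) show False by (simp add: inj_eq)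
qed

lemma exists_minimal_below:
  fixes S :: "('n::finite \<Rightarrow> nat) set"
  assumes "u \<in> S"
  obtains v where "v \<in> S" "v \<le> u" "\<And>v'. v' \<in> S \<Longrightarrow> v' \<le> v \<Longrightarrow> v' = v"
proof -
  obtain v where v: "v \<in> S" "v \<le> u" and least: "\<And>y. y \<in> S \<Longrightarrow> y \<le> u \<Longrightarrow> tdeg v \<le> tdeg y"
    using ex_has_least_nat[of "\<lambda>v. v \<in> S \<and> v \<le> u" u tdeg] assms by blast
  have "v' = v" if "v' \<in> S" "v' \<le> v" for v'
  proof (rule ccontr)
    assume "v' \<noteq> v"
    with that(2) have "tdeg v' < tdeg v" by (rule tdeg_less)
    moreover have "tdeg v \<le> tdeg v'" using least that order_trans[OF that(2) v(2)] by blast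
    ultimately show False by simp
  qed
  with v show thesis by (rule that)
qed

section \<open>Strictly positive weights by Fourier-Motzkin elimination\<close>

lemma finite_sets_separated:
  fixes X Y :: "real set"
  assumes "finite X" "finite Y" "\<And>x y. x \<in> X \<Longrightarrow> y \<in> Y \<Longrightarrow> x < y"
  obtains t where "\<And>x. x \<in> X \<Longrightarrow> x < t" "\<And>y. y \<in> Y \<Longrightarrow> t < y"
proof (cases "X = {}")
  case True
  show thesis
  proof (rule that)
    show "x < Min (insert 0 Y) - 1" if "x \<in> X" for x using True that by simp
    show "Min (insert 0 Y) - 1 < y" if "y \<in> Y" for y
    proof -
      have "Min (insert 0 Y) \<le> y" by (rule Min_le) (use assms(2) that in auto)
      then show ?thesis by simp
    qed
  qed
next
  case X: False
  show thesis
  proof (cases "Y = {}")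
    case True
    show thesis
    proof (rule that)
      show "x < Max X + 1" if "x \<in> X" for x using Max_ge[OF assms(1) that] by simp
      show "Max X + 1 < y" if "y \<in> Y" for y using True that by simp
    qed
  next
    case False
    have gap: "Max X < Min Y" using assms(3)[OF Max_in[OF assms(1) X] Min_in[OF assms(2) False]] .
    show thesis
    proof (rule that)
      show "x < (Max X + Min Y) / 2" if "x \<in> X" for x using Max_ge[OF assms(1) that] gap by simp
      show "(Max X + Min Y) / 2 < y" if "y \<in> Y" for y using Min_le[OF assms(2) that] gap by simp
    qed
  qed
qed

lemma exists_coordinate_weight:
  fixes c L :: "'a \<Rightarrow> real"
  assumes "finite A"
    and zero: "\<And>a. a \<in> A \<Longrightarrow> c a = 0 \<Longrightarrow> 0 < L a"
    and pos_neg: "\<And>a b. a \<in> A \<Longrightarrow> b \<in> A \<Longrightarrow> 0 < c a \<Longrightarrow> c b < 0 \<Longrightarrow>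
      0 < - c b * L a + c a * L b"
  obtains t where "\<And>a. a \<in> A \<Longrightarrow> 0 < c a * t + L a"
proof -
  define X where "X = (\<lambda>a. - L a / c a) ` {a \<in> A. 0 < c a}"
  define Y where "Y = (\<lambda>b. - L b / c b) ` {b \<in> A. c b < 0}"
  have "- L a / c a < - L b / c b" if "a \<in> A" "0 < c a" "b \<in> A" "c b < 0" for a b
    using pos_neg[OF that(1,3,2,4)] that(2,4) by (simp add: field_simps)
  then have "x < y" if "x \<in> X" "y \<in> Y" for x y
    using that by (auto simp: X_def Y_def)
  moreover have "finite X" "finite Y" using \<open>finite A\<close> by (simp_all add: X_def Y_def)
  ultimately obtain t where t: "\<And>x. x \<in> X \<Longrightarrow> x < t" "\<And>y. y \<in> Y \<Longrightarrow> t < y"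
    using finite_sets_separated[of X Y] by blast
  have "0 < c a * t + L a" if "a \<in> A" for a
  proof (cases "c a" "0 :: real" rule: linorder_cases)
    case less
    then have "t < - L a / c a" using t(2) that unfolding Y_def by blast
    with less show ?thesis by (simp add: field_simps)
  next
    case greater
    then have "- L a / c a < t" using t(1) that unfolding X_def by blast
    with greater show ?thesis by (simp add: field_simps)
  qed (use zero that in simp)
  then show thesis by (rule that)
qed

lemma add_closed_int_multiple:
  fixes P :: "('k \<Rightarrow> int) set"
  assumes add_closed: "\<And>a b. a \<in> P \<Longrightarrow> b \<in> P \<Longrightarrow> a + b \<in> P"
    and "a \<in> P" "0 < m"
  shows "(\<lambda>i. m * a i) \<in> P"
proof -
  obtain n where n: "m = int n" "0 < n" using \<open>0 < m\<close> by (metis zero_less_imp_eq_int of_nat_0_less_iff)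
  have "(\<lambda>i. int n * a i) \<in> P" using \<open>0 < n\<close>
  proof (induction n rule: nat_induct_non_zero)
    case (Suc n)
    have "(\<lambda>i. int (Suc n) * a i) = (\<lambda>i. int n * a i) + a" by (simp add: fun_eq_iff algebra_simps)
    then show ?case using add_closed[OF Suc.IH \<open>a \<in> P\<close>] by (simp only:)
  qed (use \<open>a \<in> P\<close> in simp)
  then show ?thesis using n(1) by simp
qed

lemma extend_weight_coordinate:
  fixes A :: "('k \<Rightarrow> int) set" and w :: "'k \<Rightarrow> real"
  assumes "finite A" "finite K" "k \<notin> K"
    and zero: "\<And>a. a \<in> A \<Longrightarrow> a k = 0 \<Longrightarrow> 0 < (\<Sum>i\<in>K. of_int (a i) * w i)"
    and pos_neg: "\<And>a b. a \<in> A \<Longrightarrow> b \<in> A \<Longrightarrow> 0 < a k \<Longrightarrow> b k < 0 \<Longrightarrow>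
      0 < (\<Sum>i\<in>K. of_int (- b k * a i + a k * b i) * w i)"
  obtains t where "\<And>a. a \<in> A \<Longrightarrow> 0 < (\<Sum>i\<in>insert k K. of_int (a i) * (w(k := t)) i)"
proof -
  define L where "L a = (\<Sum>i\<in>K. of_int (a i) * w i)" for a :: "'k \<Rightarrow> int"
  have L_comb: "(\<Sum>i\<in>K. of_int (- b k * a i + a k * b i) * w i) = of_int (a k) * L b - of_int (b k) * L a"
    for a b :: "'k \<Rightarrow> int"
  proof -
    have "(\<Sum>i\<in>K. of_int (- b k * a i + a k * b i) * w i)
        = (\<Sum>i\<in>K. of_int (a k) * (of_int (b i) * w i) - of_int (b k) * (of_int (a i) * w i))"
      by (simp add: algebra_simps)
    also have "\<dots> = of_int (a k) * L b - of_int (b k) * L a"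
      by (simp add: L_def sum_subtractf sum_distrib_left)
    finally show ?thesis .
  qed
  obtain t where t: "\<And>a. a \<in> A \<Longrightarrow> 0 < of_int (a k) * t + L a"
  proof (rule exists_coordinate_weight[of A "\<lambda>a. of_int (a k)" L])
    show "0 < L a" if "a \<in> A" "of_int (a k) = (0 :: real)" for a
      using zero that by (simp add: L_def)
    show "0 < - of_int (b k) * L a + of_int (a k) * L b"
      if "a \<in> A" "b \<in> A" "0 < (of_int (a k) :: real)" "of_int (b k) < (0 :: real)" for a b
      using pos_neg[of a b, unfolded L_comb] that by simp
  qed (use assms(1) in auto)
  have "(\<Sum>i\<in>K. of_int (a i) * (w(k := t)) i) = L a" for a
    unfolding L_def using assms(3) by (intro sum.cong) auto
  then have "(\<Sum>i\<in>insert k K. of_int (a i) * (w(k := t)) i) = of_int (a k) * t + L a" for a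
    using assms(2,3) by simp
  with t show thesis by (intro that[of t]) simp
qed

lemma exists_positive_weight:
  fixes P :: "('k \<Rightarrow> int) set"
  assumes add_closed: "\<And>a b. a \<in> P \<Longrightarrow> b \<in> P \<Longrightarrow> a + b \<in> P"
    and zero_notin: "0 \<notin> P"
    and "finite K" "finite A" "A \<subseteq> P" "\<And>a i. a \<in> A \<Longrightarrow> i \<notin> K \<Longrightarrow> a i = 0"
  shows "\<exists>w :: 'k \<Rightarrow> real. \<forall>a\<in>A. 0 < (\<Sum>i\<in>K. of_int (a i) * w i)"
  using assms(3-6)
proof (induction K arbitrary: A rule: finite_induct)
  case empty
  have "A = {}"
  proof (rule ccontr)
    assume "A \<noteq> {}"
    then obtain a where "a \<in> A" by blast
    with empty.prems have "a = 0" "a \<in> P" by (auto simp: fun_eq_iff)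
    with zero_notin show False by simp
  qed
  then show ?case by simp
next
  case (insert k K)
  define comb :: "('k \<Rightarrow> int) \<times> ('k \<Rightarrow> int) \<Rightarrow> 'k \<Rightarrow> int"
    where "comb = (\<lambda>(a, b) i. - b k * a i + a k * b i)"
  define A' where "A' = {a \<in> A. a k = 0} \<union> comb ` ({a \<in> A. 0 < a k} \<times> {b \<in> A. b k < 0})"
  have "finite A'" using insert.prems(1) by (simp add: A'_def)
  moreover have "comb (a, b) \<in> P" if "a \<in> A" "0 < a k" "b \<in> A" "b k < 0" for a b
  proof -
    have "(\<lambda>i. - b k * a i) \<in> P" "(\<lambda>i. a k * b i) \<in> P"
      using that insert.prems(2) by (intro add_closed_int_multiple[OF add_closed]; auto)+
    from add_closed[OF this] show ?thesis by (simp add: comb_def plus_fun_def)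
  qed
  then have "A' \<subseteq> P" using insert.prems(2) by (auto simp: A'_def)
  moreover have "a i = 0" if "a \<in> A'" "i \<notin> K" for a i
  proof (cases "i = k")
    case True
    with that(1) show ?thesis by (auto simp: A'_def comb_def)
  next
    case False
    with that(2) insert.prems(3) have vanish: "\<And>a. a \<in> A \<Longrightarrow> a i = 0" by simp
    with that(1) show ?thesis by (auto simp: A'_def comb_def vanish)
  qed
  ultimately have "\<exists>w :: 'k \<Rightarrow> real. \<forall>a\<in>A'. 0 < (\<Sum>i\<in>K. of_int (a i) * w i)"
    by (rule insert.IH)
  then obtain w :: "'k \<Rightarrow> real" where w: "\<And>a. a \<in> A' \<Longrightarrow> 0 < (\<Sum>i\<in>K. of_int (a i) * w i)"
    by blast
  have zero: "0 < (\<Sum>i\<in>K. of_int (a i) * w i)" if "a \<in> A" "a k = 0" for a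
    using w that by (simp add: A'_def)
  have pos_neg: "0 < (\<Sum>i\<in>K. of_int (- b k * a i + a k * b i) * w i)"
    if "a \<in> A" "b \<in> A" "0 < a k" "b k < 0" for a b
  proof -
    have "comb (a, b) \<in> A'" unfolding A'_def using that by blast
    from w[OF this] show ?thesis by (simp add: comb_def)
  qed
  obtain t where "\<And>a. a \<in> A \<Longrightarrow> 0 < (\<Sum>i\<in>insert k K. of_int (a i) * (w(k := t)) i)"
    using extend_weight_coordinate[OF insert.prems(1) insert.hyps zero pos_neg] by blast
  then show ?case by blast
qed

section \<open>Polyhedra with a strictly feasible direction\<close>

lemma polyhedron_halfspaces:
  fixes a :: "'i \<Rightarrow> 'a::euclidean_space"
  assumes "finite P"
  shows "polyhedron {x. \<forall>p\<in>P. a p \<bullet> x \<le> b p}"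
proof -
  have "{x. \<forall>p\<in>P. a p \<bullet> x \<le> b p} = \<Inter> ((\<lambda>p. {x. a p \<bullet> x \<le> b p}) ` P)" by auto
  then show ?thesis using assms by (auto intro: polyhedron_Inter simp: polyhedron_halfspace_le)
qed

lemma halfspaces_nonempty:
  fixes a :: "'i \<Rightarrow> 'a::euclidean_space"
  assumes "finite P" and z: "\<And>p. p \<in> P \<Longrightarrow> a p \<bullet> z < 0"
  shows "{x. \<forall>p\<in>P. a p \<bullet> x \<le> b p} \<noteq> {}"
proof -
  define t where "t = (\<Sum>p\<in>P. \<bar>b p\<bar> / - (a p \<bullet> z))"
  have "a p \<bullet> (t *\<^sub>R z) \<le> b p" if "p \<in> P" for p
  proof -
    have "\<bar>b p\<bar> / - (a p \<bullet> z) \<le> t"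
      unfolding t_def using assms by (intro member_le_sum that) (auto intro!: divide_nonneg_neg)
    then have "\<bar>b p\<bar> \<le> t * - (a p \<bullet> z)"
      by (subst (asm) pos_divide_le_eq) (use z[OF that] in auto)
    then show ?thesis by simp
  qed
  then show ?thesis by blast
qed

lemma aff_dim_recession_cone_halfspaces:
  fixes a :: "'i \<Rightarrow> 'a::euclidean_space"
  assumes "finite P" and z: "\<And>p. p \<in> P \<Longrightarrow> a p \<bullet> z < 0"
  shows "aff_dim (recession_cone {x. \<forall>p\<in>P. a p \<bullet> x \<le> b p}) = DIM('a)"
    (is "aff_dim (recession_cone ?C) = _")
proof -
  define D where "D = {d. \<forall>p\<in>P. a p \<bullet> d \<le> 0}"
  define N where "N = {d. \<forall>p\<in>P. a p \<bullet> d < 0}"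
  have "cone D" by (auto simp: D_def cone_def inner_commute mult_nonneg_nonpos)
  moreover have "x + d \<in> ?C" if "x \<in> ?C" "d \<in> D" for x d
    using that by (fastforce simp: D_def inner_right_distrib)
  ultimately have "D \<subseteq> recession_cone ?C" unfolding recession_cone_def by blast
  moreover have "N \<subseteq> D" by (auto simp: N_def D_def)
  ultimately have "aff_dim N \<le> aff_dim (recession_cone ?C)" by (intro aff_dim_subset) blast
  moreover have "N = \<Inter> ((\<lambda>p. {d. a p \<bullet> d < 0}) ` P)" by (auto simp: N_def)
  then have "open N" using assms(1) by (auto intro: open_Inter simp: open_halfspace_lt)
  with z have "aff_dim N = DIM('a)" by (intro aff_dim_open) (auto simp: N_def)
  ultimately show ?thesis using aff_dim_le_DIM[of "recession_cone ?C"] by linarith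
qed

section \<open>Tropical monomial multiples and initial forms\<close>

definition tmonom :: "real \<Rightarrow> 'n expo \<Rightarrow> 'n tpoly" where
  "tmonom c a = (\<lambda>u. if u = a then ereal c else \<infinity>)"

lemma is_tpoly_tmonom: "is_tpoly (tmonom c a)"
proof -
  have "{u. tmonom c a u \<noteq> \<infinity>} = {a}" by (auto simp: tmonom_def)
  then show ?thesis by (simp add: is_tpoly_def tmonom_def)
qed

lemma tmult_infinity: "tmult (\<lambda>_. \<infinity>) f = (\<lambda>_. \<infinity>)"
  unfolding tmult_def by (simp only: plus_ereal.simps(2)) (simp add: INF_top_conv flip: top_ereal_def)

lemma tmult_tmonom: "tmult (tmonom c a) g x = (if a \<le> x then ereal c + g (x - a) else \<infinity>)"
proof -
  let ?D = "{(v, w). (\<lambda>i. v i + w i) = x}"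
  have summand: "tmonom c a (fst p) + g (snd p) = (if fst p = a then ereal c + g (x - a) else \<infinity>)"
    if "p \<in> ?D" for p
  proof (cases "fst p = a")
    case True
    with that have "snd p = x - a" by (auto simp: fun_eq_iff) (metis add_diff_cancel_left')
    with True show ?thesis by (simp add: tmonom_def)
  next
    case False
    then show ?thesis by (simp add: tmonom_def)
  qed
  show ?thesis
  proof (cases "a \<le> x")
    case True
    then have mem: "(a, x - a) \<in> ?D" by (auto simp: le_fun_def fun_eq_iff)
    have "(INF p\<in>?D. tmonom c a (fst p) + g (snd p)) \<le> ereal c + g (x - a)"
      using INF_lower[OF mem, of "\<lambda>p. tmonom c a (fst p) + g (snd p)"] summand[OF mem] by simp
    moreover have "ereal c + g (x - a) \<le> (INF p\<in>?D. tmonom c a (fst p) + g (snd p))"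
      using summand by (intro INF_greatest) auto
    ultimately have "(INF p\<in>?D. tmonom c a (fst p) + g (snd p)) = ereal c + g (x - a)"
      by (rule antisym)
    with True show ?thesis by (simp add: tmult_def)
  next
    case False
    have "fst p \<noteq> a" if "p \<in> ?D" for p
      using that False by (auto simp: le_fun_def)
    then show ?thesis
      using False summand by (simp add: tmult_def INF_top_conv flip: top_ereal_def)
  qed
qed

lemma tmult_tmonom_shift: "tmult (tmonom c a) g (s + a) = ereal c + g s"
  by (simp add: tmult_tmonom le_fun_def fun_eq_iff)

lemma tmult_tmonom_finite:
  assumes "tmult (tmonom c a) g x \<noteq> \<infinity>"
  obtains s where "x = s + a" "g s \<noteq> \<infinity>"
proof -
  have "a \<le> x" "g (x - a) \<noteq> \<infinity>" using assms by (auto simp: tmult_tmonom split: if_splits)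
  moreover from \<open>a \<le> x\<close> have "x = (x - a) + a" by (simp add: le_fun_def fun_eq_iff)
  ultimately show thesis by (intro that) auto
qed

lemma init_w_lower_bound:
  assumes v: "v \<in> init_w w f" and "f' v = f v"
    and below: "\<And>x. min (f x) (h x) \<le> f' x"
    and h: "\<And>x. f v + ereal (wdot v w) \<le> h x + ereal (wdot x w)"
  shows "v \<in> init_w w f'"
proof -
  have "f v + ereal (wdot v w) \<le> f' x + ereal (wdot x w)" for x
  proof -
    have "f v + ereal (wdot v w) \<le> min (f x) (h x) + ereal (wdot x w)"
      using v h[of x] by (simp add: init_w_def min_def)
    also have "\<dots> \<le> f' x + ereal (wdot x w)"
      using below by (rule add_right_mono)
    finally show ?thesis .
  qed
  then show ?thesis using v \<open>f' v = f v\<close> by (simp add: init_w_def)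
qed

definition strict_init_w :: "real^'n::finite \<Rightarrow> 'n expo \<Rightarrow> 'n tpoly \<Rightarrow> bool" where
  "strict_init_w w u g \<longleftrightarrow>
     (\<forall>s. g s \<noteq> \<infinity> \<longrightarrow> s \<noteq> u \<longrightarrow> g u + ereal (wdot u w) < g s + ereal (wdot s w))"

lemma strict_init_w_tmult_tmonom:
  assumes "strict_init_w w u g"
  shows "strict_init_w w (u + a) (tmult (tmonom c a) g)"
  unfolding strict_init_w_def
proof (intro allI impI)
  fix x assume "tmult (tmonom c a) g x \<noteq> \<infinity>" "x \<noteq> u + a"
  then obtain s where x: "x = s + a" "g s \<noteq> \<infinity>" "s \<noteq> u"
    by (metis tmult_tmonom_finite)
  have shifted: "tmult (tmonom c a) g (t + a) + ereal (wdot (t + a) w)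
      = ereal (c + wdot a w) + (g t + ereal (wdot t w))" for t
    unfolding tmult_tmonom_shift wdot_add by (simp only: plus_ereal.simps(1)[symmetric] ac_simps)
  from assms x(2,3) have "g u + ereal (wdot u w) < g s + ereal (wdot s w)"
    by (simp add: strict_init_w_def)
  then show "tmult (tmonom c a) g (u + a) + ereal (wdot (u + a) w) < tmult (tmonom c a) g x + ereal (wdot x w)"
    unfolding x(1) shifted by (intro ereal_less_add) simp
qed

lemma strict_init_w_dominates:
  assumes v: "v \<in> init_w w f" and h: "strict_init_w w m h" "h m = f m" and "v \<noteq> m"
  shows "f v + ereal (wdot v w) \<le> h x + ereal (wdot x w)" and "f v < h v"
proof -
  have v_min: "f v + ereal (wdot v w) \<le> f y + ereal (wdot y w)" for y
    using v by (simp add: init_w_def)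
  have strict: "h m + ereal (wdot m w) < h y + ereal (wdot y w)" if "h y \<noteq> \<infinity>" "y \<noteq> m" for y
    using h(1) that by (simp add: strict_init_w_def)
  show "f v + ereal (wdot v w) \<le> h x + ereal (wdot x w)"
    using v_min[of m] h(2) strict[of x] by (cases "h x = \<infinity> \<or> x = m") auto
  show "f v < h v"
  proof (cases "h v = \<infinity>")
    case True
    with v show ?thesis by (simp add: init_w_def)
  next
    case False
    with strict[OF False \<open>v \<noteq> m\<close>] v_min[of m] h(2) show ?thesis
      by (metis add_right_mono not_le order.strict_trans1)
  qed
qed

lemma min_add_distrib_left':
  fixes a b c :: "'a::{linorder, ordered_ab_semigroup_add}"
  shows "min a b + c = min (a + c) (b + c)"
proof (cases "a \<le> b")
  case True
  then show ?thesis using add_right_mono[OF True, of c] by (simp add: min_def)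
next
  case False
  then have "b + c \<le> a + c" by (simp add: add_right_mono)
  with False show ?thesis by (auto simp: min_def intro: antisym)
qed

section \<open>Monomial orders and initial ideals\<close>

locale monomial_order =
  fixes prec :: "('n::finite) expo \<Rightarrow> 'n expo \<Rightarrow> bool"
  assumes prec_irrefl: "\<not> prec u u"
    and prec_trans: "prec u v \<Longrightarrow> prec v w \<Longrightarrow> prec u w"
    and prec_total: "u \<noteq> v \<Longrightarrow> prec u v \<or> prec v u"
    and prec_add_mono: "prec u v \<Longrightarrow> prec (u + a) (v + a)"

lemma monomial_order_if_term_order:
  assumes "monomial_term_order prec"
  shows "monomial_order prec"
proof
  note order = assms[unfolded monomial_term_order_def]
  fix u v w a :: "'a expo"
  show "\<not> prec u u" using order by simp
  show "prec u w" if "prec u v" "prec v w"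
    using order[THEN conjunct2, THEN conjunct1, rule_format, OF that] .
  show "prec u v \<or> prec v u" if "u \<noteq> v"
    using order[THEN conjunct2, THEN conjunct2, THEN conjunct1, rule_format, OF that] .
  show "prec (u + a) (v + a)" if "prec u v"
    using order[THEN conjunct2, THEN conjunct2, THEN conjunct2, THEN conjunct1, rule_format, OF that]
    by (simp add: plus_fun_def)
qed

context monomial_order
begin

lemma finite_prec_least:
  assumes "finite S" "S \<noteq> {}"
  obtains m where "m \<in> S" "\<And>v. v \<in> S \<Longrightarrow> v \<noteq> m \<Longrightarrow> prec m v"
  using assms
proof (induction S arbitrary: thesis rule: finite_ne_induct)
  case (singleton x)
  then show ?case by blast
next
  case (insert x S)
  obtain m where m: "m \<in> S" "\<And>v. v \<in> S \<Longrightarrow> v \<noteq> m \<Longrightarrow> prec m v"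
    using insert.IH by blast
  show ?case
  proof (cases "prec x m")
    case True
    with m show ?thesis by (intro insert.prems[of x]) (auto intro: prec_trans)
  next
    case False
    with m(1) insert.hyps(3) have "prec m x" using prec_total[of x m] by blast
    with m show ?thesis by (intro insert.prems[of m]) auto
  qed
qed

lemma init_prec_least:
  assumes "is_tpoly f" "f u \<noteq> \<infinity>"
  shows "f (init_prec prec f) \<noteq> \<infinity>"
    and "\<And>v. f v \<noteq> \<infinity> \<Longrightarrow> v \<noteq> init_prec prec f \<Longrightarrow> prec (init_prec prec f) v"
proof -
  have "finite {u. f u \<noteq> \<infinity>}" using assms(1) by (simp add: is_tpoly_def)
  then obtain m where m: "f m \<noteq> \<infinity>" "\<And>v. f v \<noteq> \<infinity> \<Longrightarrow> v \<noteq> m \<Longrightarrow> prec m v"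
    by (rule finite_prec_least[of "{u. f u \<noteq> \<infinity>}"]) (use assms(2) in auto)
  have "init_prec prec f = m"
    unfolding init_prec_def
  proof (rule the_equality)
    show "f m \<noteq> \<infinity> \<and> (\<forall>v. f v \<noteq> \<infinity> \<longrightarrow> v \<noteq> m \<longrightarrow> prec m v)" using m by blast
    show "u' = m" if "f u' \<noteq> \<infinity> \<and> (\<forall>v. f v \<noteq> \<infinity> \<longrightarrow> v \<noteq> u' \<longrightarrow> prec u' v)" for u'
    proof (rule ccontr)
      assume "u' \<noteq> m"
      with that m have "prec u' m" "prec m u'" by auto
      then show False using prec_irrefl prec_trans by blast
    qed
  qed
  with m show "f (init_prec prec f) \<noteq> \<infinity>"
    and "\<And>v. f v \<noteq> \<infinity> \<Longrightarrow> v \<noteq> init_prec prec f \<Longrightarrow> prec (init_prec prec f) v" by auto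
qed

lemma exists_weight_refining:
  assumes "finite P" "\<And>u v. (u, v) \<in> P \<Longrightarrow> prec u v"
  obtains z :: "real^'n" where "\<And>u v. (u, v) \<in> P \<Longrightarrow> wdot u z < wdot v z"
proof -
  define diff :: "'n expo \<Rightarrow> 'n expo \<Rightarrow> 'n \<Rightarrow> int" where "diff u v = (\<lambda>i. int (v i) - int (u i))" for u v
  define D where "D = {diff u v | u v. prec u v}"
  have add_closed: "a + b \<in> D" if "a \<in> D" "b \<in> D" for a b
  proof -
    obtain u v where "prec u v" "a = diff u v" using \<open>a \<in> D\<close> unfolding D_def by blast
    moreover obtain u' v' where "prec u' v'" "b = diff u' v'" using \<open>b \<in> D\<close> unfolding D_def by blast
    moreover have "prec (u + u') (v + v')"
    proof (rule prec_trans)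
      show "prec (u + u') (v + u')" using \<open>prec u v\<close> by (rule prec_add_mono)
      show "prec (v + u') (v + v')" using prec_add_mono[OF \<open>prec u' v'\<close>, of v] by (simp add: add.commute)
    qed
    ultimately show ?thesis unfolding D_def by (intro CollectI exI[of _ "u + u'"] exI[of _ "v + v'"]) (auto simp: diff_def)
  qed
  have "0 \<notin> D"
  proof
    assume "0 \<in> D"
    then obtain u v where "prec u v" "diff u v = 0" unfolding D_def by auto
    moreover from \<open>diff u v = 0\<close> have "v = u" by (simp add: diff_def fun_eq_iff)
    ultimately have "prec u u" by simp
    with prec_irrefl show False by blast
  qed
  moreover have "finite (case_prod diff ` P)" "case_prod diff ` P \<subseteq> D"
    using assms by (auto simp: D_def)
  ultimately obtain w :: "'n \<Rightarrow> real" where w: "\<forall>a\<in>case_prod diff ` P. 0 < (\<Sum>i\<in>UNIV. of_int (a i) * w i)"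
    using exists_positive_weight[OF add_closed, of UNIV "case_prod diff ` P"] by auto
  have "wdot u (\<chi> i. w i) < wdot v (\<chi> i. w i)" if "(u, v) \<in> P" for u v
  proof -
    have "(\<Sum>i\<in>UNIV. of_int (diff u v i) * w i) = wdot v (\<chi> i. w i) - wdot u (\<chi> i. w i)"
      by (simp add: wdot_def diff_def sum_subtractf algebra_simps)
    with w that show ?thesis by force
  qed
  then show thesis by (rule that)
qed

end

locale tropical_ideal_order = monomial_order prec for prec :: "('n::finite) expo \<Rightarrow> 'n expo \<Rightarrow> bool" +
  fixes I :: "'n tpoly set"
  assumes homog_trop: "homog_tropical_ideal I"
begin

lemma tideal: "tideal I"
  using homog_trop by (simp add: homog_tropical_ideal_def homog_ideal_def)

lemma tpoly_of_mem: "f \<in> I \<Longrightarrow> is_tpoly f"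
  and add_mem: "f \<in> I \<Longrightarrow> g \<in> I \<Longrightarrow> tadd f g \<in> I"
  and mult_mem: "f \<in> I \<Longrightarrow> is_tpoly g \<Longrightarrow> tmult g f \<in> I"
  using tideal unfolding tideal_def by blast+

lemma hcomp_mem: "f \<in> I \<Longrightarrow> hcomp d f \<in> I"
  using homog_trop by (simp add: homog_tropical_ideal_def homog_ideal_def)

lemma infinity_mem: "(\<lambda>_. \<infinity>) \<in> I"
proof -
  obtain f where "f \<in> I" using tideal unfolding tideal_def by blast
  moreover have "is_tpoly (\<lambda>_. \<infinity>)" by (simp add: is_tpoly_def)
  ultimately have "tmult (\<lambda>_. \<infinity>) f \<in> I" by (rule mult_mem)
  then show ?thesis by (simp only: tmult_infinity)
qed

lemma elimination:
  assumes "f \<in> I" "g \<in> I" "homog_of_deg d f" "homog_of_deg d g" "f u = g u" "f u \<noteq> \<infinity>"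
  obtains h where "h \<in> I" "h u = \<infinity>" "\<And>v. min (f v) (g v) \<le> h v"
    "\<And>v. f v \<noteq> g v \<Longrightarrow> h v = min (f v) (g v)"
proof -
  have "\<forall>f\<in>I. \<forall>g\<in>I. \<forall>d u. homog_of_deg d f \<and> homog_of_deg d g \<and> f u = g u \<and> f u \<noteq> \<infinity> \<longrightarrow>
       (\<exists>h\<in>I. h u = \<infinity> \<and> (\<forall>v. h v \<ge> min (f v) (g v) \<and> (f v \<noteq> g v \<longrightarrow> h v = min (f v) (g v))))"
    using homog_trop unfolding homog_tropical_ideal_def by (elim conjE)
  with assms obtain h where "h \<in> I" "h u = \<infinity>" "\<forall>v. h v \<ge> min (f v) (g v) \<and> (f v \<noteq> g v \<longrightarrow> h v = min (f v) (g v))"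
    by blast
  then show thesis by (intro that[of h]) auto
qed

definition lead_exps :: "'n expo set" where
  "lead_exps = {init_prec prec f | f. f \<in> I \<and> (\<exists>u. f u \<noteq> \<infinity>)}"

definition init_exps :: "'n expo set" where
  "init_exps = {v. \<exists>u\<in>lead_exps. u \<le> v}"

definition min_gens :: "'n expo set" where
  "min_gens = {u \<in> lead_exps. \<forall>v\<in>lead_exps. v \<le> u \<longrightarrow> v = u}"

lemma init_prec_ideal_eq: "init_prec_ideal prec I = {S. finite S \<and> S \<subseteq> init_exps}"
  unfolding init_prec_ideal_def init_exps_def lead_exps_def le_fun_def by blast

lemma finite_min_gens: "finite min_gens"
  unfolding min_gens_def by (rule finite_minimal_elements)

lemma min_gen_below:
  assumes "v \<in> init_exps"
  obtains u where "u \<in> min_gens" "u \<le> v"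
proof -
  obtain u' where "u' \<in> lead_exps" "u' \<le> v" using assms by (auto simp: init_exps_def)
  then obtain u where "u \<in> lead_exps" "u \<le> u'" "\<And>y. y \<in> lead_exps \<Longrightarrow> y \<le> u \<Longrightarrow> y = u"
    using exists_minimal_below by blast
  with \<open>u' \<le> v\<close> show thesis by (intro that[of u]) (auto simp: min_gens_def)
qed

lemma least_init_exp:
  assumes "f \<in> I" "f u \<noteq> \<infinity>"
  obtains m where "m \<in> init_exps" "f m \<noteq> \<infinity>"
    "\<And>y. f y \<noteq> \<infinity> \<Longrightarrow> y \<in> init_exps \<Longrightarrow> y \<noteq> m \<Longrightarrow> prec m y"
proof -
  have "init_prec prec f \<in> lead_exps" using assms by (auto simp: lead_exps_def)
  then have "init_prec prec f \<in> {y. f y \<noteq> \<infinity> \<and> y \<in> init_exps}"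
    using init_prec_least(1)[OF tpoly_of_mem[OF assms(1)] assms(2)] by (auto simp: init_exps_def)
  moreover have "finite {y. f y \<noteq> \<infinity> \<and> y \<in> init_exps}"
    using tpoly_of_mem[OF assms(1)] by (auto simp: is_tpoly_def elim: finite_subset[rotated])
  ultimately obtain m where "m \<in> {y. f y \<noteq> \<infinity> \<and> y \<in> init_exps}"
    "\<And>y. y \<in> {y. f y \<noteq> \<infinity> \<and> y \<in> init_exps} \<Longrightarrow> y \<noteq> m \<Longrightarrow> prec m y"
    using finite_prec_least by blast
  then show thesis by (intro that[of m]) auto
qed

definition leads :: "'n expo \<Rightarrow> 'n tpoly \<Rightarrow> bool" where
  "leads u g \<longleftrightarrow> g \<in> I \<and> homog_of_deg (tdeg u) g \<and> g u \<noteq> \<infinity> \<and>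
     (\<forall>s. g s \<noteq> \<infinity> \<longrightarrow> s \<noteq> u \<longrightarrow> prec u s)"

lemma exists_leads:
  assumes "u \<in> lead_exps"
  shows "\<exists>g. leads u g"
proof -
  obtain f v where f: "f \<in> I" "f v \<noteq> \<infinity>" "u = init_prec prec f"
    using assms by (auto simp: lead_exps_def)
  note least = init_prec_least[OF tpoly_of_mem[OF f(1)] f(2), folded f(3)]
  have "leads u (hcomp (tdeg u) f)"
    using hcomp_mem[OF f(1)] least by (auto simp: leads_def hcomp_def homog_of_deg_def)
  then show ?thesis by blast
qed

definition gen_poly :: "'n expo \<Rightarrow> 'n tpoly" where
  "gen_poly u = (SOME g. leads u g)"

lemma leads_gen_poly:
  assumes "u \<in> min_gens"
  shows "leads u (gen_poly u)"
proof -
  have "\<exists>g. leads u g" using assms by (intro exists_leads) (simp add: min_gens_def)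
  then show ?thesis unfolding gen_poly_def by (rule someI_ex)
qed

definition gen_pairs :: "('n expo \<times> 'n expo) set" where
  "gen_pairs = (SIGMA u:min_gens. {s. gen_poly u s \<noteq> \<infinity> \<and> s \<noteq> u})"

lemma finite_gen_pairs: "finite gen_pairs"
  unfolding gen_pairs_def
proof (rule finite_SigmaI[OF finite_min_gens])
  fix u assume "u \<in> min_gens"
  then have "is_tpoly (gen_poly u)" using leads_gen_poly tpoly_of_mem by (simp add: leads_def)
  then show "finite {s. gen_poly u s \<noteq> \<infinity> \<and> s \<noteq> u}"
    by (auto simp: is_tpoly_def elim: finite_subset[rotated])
qed

lemma prec_of_gen_pair: "(u, s) \<in> gen_pairs \<Longrightarrow> prec u s"
  using leads_gen_poly by (auto simp: gen_pairs_def leads_def)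

text \<open>The polyhedron C of the theorem; the margin 1 replaces a strict inequality, so that the
  region is closed.\<close>

definition weight_region :: "(real^'n) set" where
  "weight_region = {w. \<forall>(u, s)\<in>gen_pairs.
     wdot u w + real_of_ereal (gen_poly u u) + 1 \<le> wdot s w + real_of_ereal (gen_poly u s)}"

lemma leads_tmult_tmonom:
  assumes "leads u g"
  shows "leads (u + a) (tmult (tmonom c a) g)"
proof -
  have "tmult (tmonom c a) g \<in> I"
    using assms by (simp add: leads_def mult_mem is_tpoly_tmonom)
  moreover have "tdeg x = tdeg (u + a) \<and> (x \<noteq> u + a \<longrightarrow> prec (u + a) x)"
    if hx: "tmult (tmonom c a) g x \<noteq> \<infinity>" for x
  proof -
    obtain s where x: "x = s + a" and s: "g s \<noteq> \<infinity>"
      using hx by (rule tmult_tmonom_finite)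
    have deg: "tdeg s = tdeg u" using assms s unfolding leads_def homog_of_deg_def by blast
    have lead: "prec u s" if "s \<noteq> u" using assms s that by (simp add: leads_def)
    show ?thesis
    proof
      show "tdeg x = tdeg (u + a)" using deg by (simp add: x tdeg_add)
      show "x \<noteq> u + a \<longrightarrow> prec (u + a) x" using lead by (auto simp: x intro: prec_add_mono)
    qed
  qed
  moreover have "tmult (tmonom c a) g (u + a) \<noteq> \<infinity>"
    using assms by (simp add: leads_def tmult_tmonom_shift)
  ultimately show ?thesis unfolding leads_def homog_of_deg_def by blast
qed

lemma strict_init_w_gen_poly:
  assumes "u \<in> min_gens" "w \<in> weight_region"
  shows "strict_init_w w u (gen_poly u)"
  unfolding strict_init_w_def
proof (intro allI impI)
  fix s assume s: "gen_poly u s \<noteq> \<infinity>" "s \<noteq> u"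
  then have "(u, s) \<in> gen_pairs" using assms(1) by (simp add: gen_pairs_def)
  with assms(2) have ineq: "wdot u w + real_of_ereal (gen_poly u u) + 1 \<le> wdot s w + real_of_ereal (gen_poly u s)"
    unfolding weight_region_def by blast
  have "is_tpoly (gen_poly u)" "gen_poly u u \<noteq> \<infinity>"
    using leads_gen_poly[OF assms(1)] tpoly_of_mem by (auto simp: leads_def)
  with s(1) obtain r q where "gen_poly u u = ereal r" "gen_poly u s = ereal q"
    by (cases "gen_poly u u"; cases "gen_poly u s") (auto simp: is_tpoly_def)
  with ineq show "gen_poly u u + ereal (wdot u w) < gen_poly u s + ereal (wdot s w)" by simp
qed

lemma strict_init_witness:
  assumes "v \<in> init_exps"
  obtains h where "leads v h" "h v = ereal c" "\<And>w. w \<in> weight_region \<Longrightarrow> strict_init_w w v h"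
proof -
  obtain u where u: "u \<in> min_gens" "u \<le> v" using min_gen_below[OF assms] .
  define a where "a = v - u"
  have v: "v = u + a" using u(2) by (simp add: a_def le_fun_def fun_eq_iff)
  have g: "leads u (gen_poly u)" by (rule leads_gen_poly[OF u(1)])
  then obtain r where r: "gen_poly u u = ereal r"
    using tpoly_of_mem by (cases "gen_poly u u") (auto simp: leads_def is_tpoly_def)
  define h where "h = tmult (tmonom (c - r) a) (gen_poly u)"
  show thesis
  proof (rule that)
    show "leads v h" unfolding h_def v by (rule leads_tmult_tmonom[OF g])
    show "h v = ereal c" by (simp add: h_def v r tmult_tmonom_shift)
    show "strict_init_w w v h" if "w \<in> weight_region" for w
      unfolding h_def v by (rule strict_init_w_tmult_tmonom[OF strict_init_w_gen_poly[OF u(1) that]])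
  qed
qed

lemma eliminate_least_init_exp:
  assumes w: "w \<in> weight_region"
    and f: "f \<in> I" "homog_of_deg d f" "v \<in> init_w w f" "v \<notin> init_exps"
    and m: "m \<in> init_exps" "f m \<noteq> \<infinity>"
      "\<And>y. f y \<noteq> \<infinity> \<Longrightarrow> y \<in> init_exps \<Longrightarrow> y \<noteq> m \<Longrightarrow> prec m y"
  obtains f' where "f' \<in> I" "homog_of_deg d f'" "v \<in> init_w w f'"
    "\<And>y. f' y \<noteq> \<infinity> \<Longrightarrow> y \<in> init_exps \<Longrightarrow> prec m y"
proof -
  obtain r where r: "f m = ereal r"
    using m(2) tpoly_of_mem[OF f(1)] by (cases "f m") (auto simp: is_tpoly_def)
  obtain h where "leads m h" "h m = f m" and h_strict: "strict_init_w w m h"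
    using strict_init_witness[OF m(1), of r] w r by metis
  then have h: "h \<in> I" "homog_of_deg d h" and h_prec: "\<And>x. h x \<noteq> \<infinity> \<Longrightarrow> x \<noteq> m \<Longrightarrow> prec m x"
    using f(2) m(2) by (auto simp: leads_def homog_of_deg_def)
  obtain f' where f': "f' \<in> I" "f' m = \<infinity>" and below: "\<And>x. min (f x) (h x) \<le> f' x"
    and eq: "\<And>x. f x \<noteq> h x \<Longrightarrow> f' x = min (f x) (h x)"
    using elimination[OF f(1) h(1) f(2) h(2) _ m(2)] \<open>h m = f m\<close> by auto
  have supp: "f x \<noteq> \<infinity> \<or> h x \<noteq> \<infinity>" if "f' x \<noteq> \<infinity>" for x
    using below[of x] that by (auto simp: min_def split: if_splits)
  have "v \<noteq> m" using f(4) m(1) by blast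
  note dominated = strict_init_w_dominates[OF f(3) h_strict \<open>h m = f m\<close> this]
  have "homog_of_deg d f'"
    using supp f(2) h(2) by (auto simp: homog_of_deg_def)
  moreover have "v \<in> init_w w f'"
    using f(3) _ below dominated(1) by (rule init_w_lower_bound) (use eq dominated(2) in simp)
  moreover have "prec m y" if "f' y \<noteq> \<infinity>" "y \<in> init_exps" for y
    using supp[OF that(1)] m(3) h_prec f'(2) that by metis
  ultimately show thesis using f'(1) by (intro that) auto
qed

lemma no_homog_w_initial_outside_init_exps:
  assumes w: "w \<in> weight_region" and v: "v \<notin> init_exps"
  shows "f \<in> I \<Longrightarrow> homog_of_deg d f \<Longrightarrow> v \<in> init_w w f \<Longrightarrow> m \<in> init_exps \<Longrightarrow> f m \<noteq> \<infinity> \<Longrightarrow>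
    (\<And>y. f y \<noteq> \<infinity> \<Longrightarrow> y \<in> init_exps \<Longrightarrow> y \<noteq> m \<Longrightarrow> prec m y) \<Longrightarrow> False"
proof (induction "card {y. tdeg y = d \<and> \<not> prec y m}" arbitrary: f m rule: less_induct)
  case less
  obtain f' where f': "f' \<in> I" "homog_of_deg d f'" "v \<in> init_w w f'"
    and above: "\<And>y. f' y \<noteq> \<infinity> \<Longrightarrow> y \<in> init_exps \<Longrightarrow> prec m y"
    using eliminate_least_init_exp[OF w less.prems(1-3) v less.prems(4-6)] by blast
  have "f' v \<noteq> \<infinity>" using f'(3) by (simp add: init_w_def)
  then obtain m' where m': "m' \<in> init_exps" "f' m' \<noteq> \<infinity>"
    "\<And>y. f' y \<noteq> \<infinity> \<Longrightarrow> y \<in> init_exps \<Longrightarrow> y \<noteq> m' \<Longrightarrow> prec m' y"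
    using least_init_exp[OF f'(1)] by blast
  \<comment> \<open>the \<prec>-least exponent of init_exps in the support moves strictly up among
    the finitely many exponents of degree d\<close>
  have "prec m m'" using above m'(1,2) by blast
  have "tdeg m = d" using less.prems(2,5) by (simp add: homog_of_deg_def)
  have "{y. tdeg y = d \<and> \<not> prec y m'} \<subset> {y. tdeg y = d \<and> \<not> prec y m}"
  proof
    show "{y. tdeg y = d \<and> \<not> prec y m'} \<subseteq> {y. tdeg y = d \<and> \<not> prec y m}"
      using \<open>prec m m'\<close> prec_trans by blast
    show "{y. tdeg y = d \<and> \<not> prec y m'} \<noteq> {y. tdeg y = d \<and> \<not> prec y m}"
      using \<open>prec m m'\<close> \<open>tdeg m = d\<close> prec_irrefl by blast
  qed
  then have "card {y. tdeg y = d \<and> \<not> prec y m'} < card {y. tdeg y = d \<and> \<not> prec y m}"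
    by (rule psubset_card_mono[OF finite_subset[OF _ finite_tdeg_eq[of d]], rotated]) auto
  then show False using less.hyps f'(1-3) m' by blast
qed

lemma w_initial_in_init_exps:
  assumes "w \<in> weight_region" "f \<in> I" "v \<in> init_w w f"
  shows "v \<in> init_exps"
proof (rule ccontr)
  assume v: "v \<notin> init_exps"
  let ?g = "hcomp (tdeg v) f"
  have g: "?g \<in> I" "homog_of_deg (tdeg v) ?g" using hcomp_mem[OF assms(2)]
    by (auto simp: homog_of_deg_def hcomp_def)
  have "v \<in> init_w w ?g" using assms(3) by (auto simp: init_w_def hcomp_def)
  moreover from this have "?g v \<noteq> \<infinity>" by (simp add: init_w_def)
  then obtain m where "m \<in> init_exps" "?g m \<noteq> \<infinity>"
    "\<And>y. ?g y \<noteq> \<infinity> \<Longrightarrow> y \<in> init_exps \<Longrightarrow> y \<noteq> m \<Longrightarrow> prec m y"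
    using least_init_exp[OF g(1)] by blast
  ultimately show False using no_homog_w_initial_outside_init_exps[OF assms(1) v g] by blast
qed

lemma exists_normalized_poly:
  assumes w: "w \<in> weight_region"
  shows "finite S \<Longrightarrow> S \<subseteq> init_exps \<Longrightarrow> \<exists>F\<in>I. \<forall>x.
    (x \<in> S \<longrightarrow> F x + ereal (wdot x w) = 0) \<and> (x \<notin> S \<longrightarrow> 0 < F x + ereal (wdot x w))"
proof (induction S rule: finite_induct)
  case empty
  show ?case using infinity_mem by force
next
  case (insert v S)
  then obtain F where F: "F \<in> I" "\<And>x. x \<in> S \<Longrightarrow> F x + ereal (wdot x w) = 0"
    "\<And>x. x \<notin> S \<Longrightarrow> 0 < F x + ereal (wdot x w)"
    by auto
  obtain h where "leads v h" "h v = ereal (- wdot v w)" "strict_init_w w v h"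
    using strict_init_witness[of v "- wdot v w"] insert.prems w by (metis insert_subset)
  then have h: "h \<in> I" "h v = ereal (- wdot v w)"
    and h_strict: "\<And>x. h x \<noteq> \<infinity> \<Longrightarrow> x \<noteq> v \<Longrightarrow> h v + ereal (wdot v w) < h x + ereal (wdot x w)"
    by (auto simp: leads_def strict_init_w_def)
  have hv: "h v + ereal (wdot v w) = 0" using h(2) by simp
  have h_pos: "0 < h x + ereal (wdot x w)" if "x \<noteq> v" for x
    using h_strict[OF _ that] hv by (cases "h x = \<infinity>") auto
  have tadd: "tadd F h x + ereal (wdot x w) = min (F x + ereal (wdot x w)) (h x + ereal (wdot x w))" for x
    by (simp add: tadd_def min_add_distrib_left')
  have "tadd F h x + ereal (wdot x w) = 0" if "x \<in> insert v S" for x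
  proof (cases "x = v")
    case True
    with F(3)[of v] insert.hyps(2) hv show ?thesis by (auto simp: tadd min_def dest: leD)
  next
    case False
    with that F(2)[of x] h_pos[of x] show ?thesis by (simp add: tadd min_def less_imp_le)
  qed
  moreover have "0 < tadd F h x + ereal (wdot x w)" if "x \<notin> insert v S" for x
    using that F(3)[of x] h_pos[of x] by (simp add: tadd)
  ultimately have "\<forall>x. (x \<in> insert v S \<longrightarrow> tadd F h x + ereal (wdot x w) = 0) \<and>
      (x \<notin> insert v S \<longrightarrow> 0 < tadd F h x + ereal (wdot x w))"
    by blast
  with add_mem[OF F(1) h(1)] show ?case by blast
qed

lemma init_w_realizes:
  assumes w: "w \<in> weight_region" and "finite S" "S \<subseteq> init_exps"
  shows "S \<in> init_w_ideal w I"
proof (cases "S = {}")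
  case True
  have "init_w w (\<lambda>_. \<infinity>) = {}" by (simp add: init_w_def)
  with True infinity_mem show ?thesis by (auto simp: init_w_ideal_def)
next
  case False
  then obtain v0 where "v0 \<in> S" by blast
  obtain F where "F \<in> I" and F: "\<And>x. x \<in> S \<Longrightarrow> F x + ereal (wdot x w) = 0"
    "\<And>x. x \<notin> S \<Longrightarrow> 0 < F x + ereal (wdot x w)"
    using exists_normalized_poly[OF w assms(2,3)] by blast
  have "init_w w F = S"
  proof (intro equalityI subsetI)
    fix x assume "x \<in> init_w w F"
    then have "F x + ereal (wdot x w) \<le> F v0 + ereal (wdot v0 w)" by (simp add: init_w_def)
    with F(1)[OF \<open>v0 \<in> S\<close>] F(2)[of x] show "x \<in> S" by (metis less_le_trans less_irrefl)
  next
    fix x assume "x \<in> S"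
    have "0 \<le> F y + ereal (wdot y w)" for y
      using F(1)[of y] F(2)[of y] by (cases "y \<in> S") auto
    with F(1)[OF \<open>x \<in> S\<close>] show "x \<in> init_w w F" by (auto simp: init_w_def)
  qed
  with \<open>F \<in> I\<close> show ?thesis by (auto simp: init_w_ideal_def)
qed

lemma init_w_ideal_eq:
  assumes w: "w \<in> weight_region"
  shows "init_w_ideal w I = init_prec_ideal prec I"
proof
  show "init_w_ideal w I \<subseteq> init_prec_ideal prec I"
  proof
    fix S assume "S \<in> init_w_ideal w I"
    then obtain f where f: "f \<in> I" "S = init_w w f" by (auto simp: init_w_ideal_def)
    have "finite S"
      using tpoly_of_mem[OF f(1)] f(2) by (auto simp: is_tpoly_def init_w_def elim: finite_subset[rotated])
    moreover have "S \<subseteq> init_exps" using w_initial_in_init_exps[OF w f(1)] f(2) by blast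
    ultimately show "S \<in> init_prec_ideal prec I" by (simp add: init_prec_ideal_eq)
  qed
  show "init_prec_ideal prec I \<subseteq> init_w_ideal w I"
    using init_w_realizes[OF w] by (auto simp: init_prec_ideal_eq)
qed

lemma weight_region_halfspaces:
  "weight_region = {w. \<forall>p\<in>gen_pairs. ((\<chi> i. real (fst p i)) - (\<chi> i. real (snd p i))) \<bullet> w
     \<le> real_of_ereal (gen_poly (fst p) (snd p)) - real_of_ereal (gen_poly (fst p) (fst p)) - 1}"
  unfolding weight_region_def by (auto simp: inner_diff_left wdot_eq_inner[symmetric])

lemma weight_region_polyhedron:
  shows "polyhedron weight_region" "weight_region \<noteq> {}"
    and "aff_dim (recession_cone weight_region) = int CARD('n)"
proof -
  obtain z :: "real^'n" where z: "\<And>u s. (u, s) \<in> gen_pairs \<Longrightarrow> wdot u z < wdot s z"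
    using exists_weight_refining[OF finite_gen_pairs prec_of_gen_pair] by blast
  then have z': "((\<chi> i. real (fst p i)) - (\<chi> i. real (snd p i))) \<bullet> z < 0" if "p \<in> gen_pairs" for p
    using that by (cases p) (simp add: inner_diff_left wdot_eq_inner[symmetric])
  show "polyhedron weight_region"
    unfolding weight_region_halfspaces by (rule polyhedron_halfspaces[OF finite_gen_pairs])
  show "weight_region \<noteq> {}"
    unfolding weight_region_halfspaces by (rule halfspaces_nonempty[OF finite_gen_pairs z'])
  show "aff_dim (recession_cone weight_region) = int CARD('n)"
    unfolding weight_region_halfspaces
    using aff_dim_recession_cone_halfspaces[OF finite_gen_pairs z'] by simp
qed

end

theorem lemma2p7:
  fixes I :: "('n::finite) tpoly set"
    and prec :: "'n expo \<Rightarrow> 'n expo \<Rightarrow> bool"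
  assumes "homog_tropical_ideal I"
    and "monomial_term_order prec"
  shows "\<exists>C :: (real^'n) set. polyhedron C \<and> C \<noteq> {}
           \<and> aff_dim (recession_cone C) = int CARD('n)
           \<and> (\<forall>w \<in> interior C. init_w_ideal w I = init_prec_ideal prec I)"
proof -
  interpret tropical_ideal_order prec I
    using assms by (intro tropical_ideal_order.intro monomial_order_if_term_order tropical_ideal_order_axioms.intro)
  show ?thesis
    using weight_region_polyhedron init_w_ideal_eq interior_subset by blast
qed

end
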